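(* Let $m,\nu$ be positive integers with $\nu\ge2$ and $\ell(m)\ge\nu-1$, where $\ell(m)$ is the number of prime factors of $m$ counted with multiplicity. Then there exists a numerical semigroup $S$ with multiplicity $m(S)=m$, embedding dimension $\nu(S)=\nu$, and $\alpha$-rectangular Apéry set.
   Context: A numerical semigroup is a submonoid $S$ of $(\mathbb N,+)$ with finite complement in $\mathbb N$; $g_1<\dots<g_\nu$ is its minimal system of generators, $\nu(S)=\nu$ its embedding dimension, $m(S)=g_1$ its multiplicity, and $\mathrm{Ap}(S)=\{s\in S: s-m(S)\notin S\}$. For $i=2,\dots,\nu$, $\alpha_i=\max\{h\in\mathbb N: hg_i\in\mathrm{Ap}(S)\}$, and $\mathrm{Ap}(S)$ is $\alpha$-rectangular if $\mathrm{Ap}(S)=\{\sum_{i=2}^\nu\lambda_ig_i: 0\le\lambda_i\le\alpha_i\}$. *)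

theory Defs
  imports "HOL-Computational_Algebra.Computational_Algebra"
begin

definition numerical_semigroup :: "nat set \<Rightarrow> bool" where
  "numerical_semigroup S \<longleftrightarrow> 0 \<in> S \<and> (\<forall>a\<in>S. \<forall>b\<in>S. a + b \<in> S) \<and> finite (UNIV - S)"

definition min_gens :: "nat set \<Rightarrow> nat set" where
  "min_gens S = {s \<in> S. s \<noteq> 0 \<and> \<not> (\<exists>a\<in>S. \<exists>b\<in>S. a \<noteq> 0 \<and> b \<noteq> 0 \<and> a + b = s)}"

definition embedding_dimension :: "nat set \<Rightarrow> nat" where
  "embedding_dimension S = card (min_gens S)"

definition multiplicity_ns :: "nat set \<Rightarrow> nat" where
  "multiplicity_ns S = Min (min_gens S)"

definition apery :: "nat set \<Rightarrow> nat set" where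
  "apery S = {s \<in> S. \<not> (multiplicity_ns S \<le> s \<and> s - multiplicity_ns S \<in> S)}"

definition alpha_ns :: "nat set \<Rightarrow> nat \<Rightarrow> nat" where
  "alpha_ns S g = Max {h. h * g \<in> apery S}"

definition alpha_rectangular :: "nat set \<Rightarrow> bool" where
  "alpha_rectangular S \<longleftrightarrow>
     (let G = min_gens S - {multiplicity_ns S} in
      apery S = {(\<Sum>g\<in>G. lam g * g) | lam. \<forall>g\<in>G. lam g \<le> alpha_ns S g})"

end

theory Submission
  imports Defs
begin

text \<open>Write m = d_0 \<cdots> d_{n-1} with n = \<nu> - 1 factors d_i \<ge> 2, put M_i = d_0 \<cdots> d_{i-1}, and let S be
  generated by m and g_i = m + M_i. Since d_i g_i = (d_i - 1) m + g_{i+1} (and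
  d_{n-1} g_{n-1} = (d_{n-1} + 1) m), carrying turns every element of S into
  \<Sum> \<lambda>_i g_i + c m with mixed-radix digits \<lambda>_i < d_i. As \<Sum> \<lambda>_i g_i = (\<Sum> \<lambda>_i) m + \<Sum> \<lambda>_i M_i
  and the mixed-radix number \<Sum> \<lambda>_i M_i < m determines its digits, c is determined as well.
  Hence Ap(S) consists exactly of the \<Sum> \<lambda>_i g_i with \<lambda>_i < d_i, all elements below 2m are
  minimal generators, and \<alpha>_i = d_i - 1.\<close>

lemma prime_factorization_split:
  fixes m n :: nat
  assumes "m > 0" "n \<ge> 1" "size (prime_factorization m) \<ge> n"
  shows "\<exists>d. (\<forall>i<n. 2 \<le> d i) \<and> (\<Prod>i<n. d i) = m"
  using assms
proof (induction n arbitrary: m)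
  case 0
  then show ?case by simp
next
  case (Suc n)
  show ?case
  proof (cases "n = 0")
    case True
    have "m \<noteq> 1" using Suc.prems by auto
    then show ?thesis using True Suc.prems by (intro exI[of _ "\<lambda>_. m"]) auto
  next
    case False
    obtain p where "p \<in># prime_factorization m"
      using Suc.prems by fastforce
    then have "prime p" "p dvd m" by auto
    then obtain m' where m: "m = m' * p" by (metis dvd_def mult.commute)
    have "m' > 0" using m Suc.prems by (cases m') auto
    then have "size (prime_factorization m') \<ge> n"
      using Suc.prems \<open>prime p\<close> m
      by (simp add: prime_factorization_mult prime_gt_0_nat prime_factorization_prime)
    then obtain d where d: "\<forall>i<n. 2 \<le> d i" "(\<Prod>i<n. d i) = m'"
      using Suc.IH \<open>m' > 0\<close> False by auto
    show ?thesis
      using d m prime_ge_2_nat[OF \<open>prime p\<close>]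
      by (intro exI[of _ "d(n := p)"]) (auto simp: less_Suc_eq)
  qed
qed

lemma mixed_radix_sum_less:
  fixes l d :: "nat \<Rightarrow> nat"
  assumes "\<forall>i<k. l i < d i"
  shows "(\<Sum>i<k. l i * (\<Prod>j<i. d j)) < (\<Prod>j<k. d j)"
  using assms
proof (induction k)
  case 0
  then show ?case by simp
next
  case (Suc k)
  have "(\<Sum>i<k. l i * (\<Prod>j<i. d j)) < (\<Prod>j<k. d j)" using Suc by simp
  moreover have "l k < d k" using Suc.prems by simp
  then have "Suc (l k) * (\<Prod>j<k. d j) \<le> d k * (\<Prod>j<k. d j)"
    by (intro mult_le_mono1) simp
  ultimately show ?case by (simp add: mult.commute)
qed

lemma mixed_radix_inj:
  fixes l l' d :: "nat \<Rightarrow> nat"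
  assumes "\<forall>i<k. l i < d i" and "\<forall>i<k. l' i < d i"
    and "(\<Sum>i<k. l i * (\<Prod>j<i. d j)) = (\<Sum>i<k. l' i * (\<Prod>j<i. d j))"
  shows "\<forall>i<k. l i = l' i"
  using assms
proof (induction k)
  case 0
  then show ?case by simp
next
  case (Suc k)
  define P where "P = (\<Prod>j<k. d j)"
  define A where "A = (\<Sum>i<k. l i * (\<Prod>j<i. d j))"
  define A' where "A' = (\<Sum>i<k. l' i * (\<Prod>j<i. d j))"
  have "A < P" "A' < P"
    using mixed_radix_sum_less[of k l d] mixed_radix_sum_less[of k l' d] Suc.prems
    unfolding A_def A'_def P_def by simp_all
  have eq: "A + l k * P = A' + l' k * P"
    using Suc.prems(3) by (simp add: A_def A'_def P_def)
  have "l k = (A + l k * P) div P" using \<open>A < P\<close> by simp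
  also have "\<dots> = (A' + l' k * P) div P" using eq by simp
  also have "\<dots> = l' k" using \<open>A' < P\<close> by simp
  finally have "l k = l' k" .
  with eq have "A = A'" by simp
  have "\<forall>i<k. l i = l' i"
    by (rule Suc.IH) (use Suc.prems \<open>A = A'\<close> in \<open>simp_all add: A_def A'_def\<close>)
  with \<open>l k = l' k\<close> show ?case by (auto simp: less_Suc_eq)
qed

lemma apery_add_left:
  assumes "\<forall>a\<in>S. \<forall>b\<in>S. a + b \<in> S" "x \<in> S" "y \<in> S" "x + y \<in> apery S"
  shows "x \<in> apery S"
proof -
  have "\<not> (multiplicity_ns S \<le> x \<and> x - multiplicity_ns S \<in> S)"
  proof
    assume "multiplicity_ns S \<le> x \<and> x - multiplicity_ns S \<in> S"
    then have "multiplicity_ns S \<le> x + y \<and> x + y - multiplicity_ns S \<in> S"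
      using assms(1,3) by (metis Nat.diff_add_assoc2 trans_le_add1)
    with assms(4) show False by (simp add: apery_def)
  qed
  with assms(2) show ?thesis by (simp add: apery_def)
qed

lemma mult_mem_numerical_semigroup:
  assumes "numerical_semigroup S" "g \<in> S"
  shows "k * g \<in> S"
  using assms by (induction k) (auto simp: numerical_semigroup_def)

lemma alpha_ns_eqI:
  assumes S: "numerical_semigroup S" and "g \<in> S"
    and "k * g \<in> apery S" and "Suc k * g \<notin> apery S"
  shows "alpha_ns S g = k"
proof -
  have closed: "\<forall>a\<in>S. \<forall>b\<in>S. a + b \<in> S" using S by (simp add: numerical_semigroup_def)
  have mult: "h * g \<in> S" for h using mult_mem_numerical_semigroup[OF S \<open>g \<in> S\<close>] .
  have "h * g \<in> apery S \<longleftrightarrow> h \<le> k" for h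
  proof
    assume "h * g \<in> apery S"
    show "h \<le> k"
    proof (rule ccontr)
      assume "\<not> h \<le> k"
      then have "h * g = Suc k * g + (h - Suc k) * g"
        by (simp flip: add_mult_distrib del: mult_Suc)
      with \<open>h * g \<in> apery S\<close> have "Suc k * g \<in> apery S"
        using apery_add_left[OF closed mult mult] by metis
      with assms(4) show False ..
    qed
  next
    assume "h \<le> k"
    then have "k * g = h * g + (k - h) * g" by (simp flip: add_mult_distrib)
    with assms(3) show "h * g \<in> apery S"
      using apery_add_left[OF closed mult mult] by metis
  qed
  then have "{h. h * g \<in> apery S} = {..k}" by auto
  moreover have "Max {..k} = k" by (rule Max_eqI) auto
  ultimately show ?thesis by (simp add: alpha_ns_def)
qed

lemma min_gens_memI:
  assumes "\<forall>x\<in>S. x \<noteq> 0 \<longrightarrow> m \<le> x" "s \<in> S" "s \<noteq> 0" "s < 2 * m"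
  shows "s \<in> min_gens S"
proof -
  have "\<not> (\<exists>a\<in>S. \<exists>b\<in>S. a \<noteq> 0 \<and> b \<noteq> 0 \<and> a + b = s)"
  proof
    assume "\<exists>a\<in>S. \<exists>b\<in>S. a \<noteq> 0 \<and> b \<noteq> 0 \<and> a + b = s"
    then obtain a b where "a \<in> S" "b \<in> S" "a \<noteq> 0" "b \<noteq> 0" "a + b = s" by blast
    with assms(1) have "m \<le> a" "m \<le> b" by auto
    with \<open>a + b = s\<close> assms(4) show False by linarith
  qed
  with assms(2,3) show ?thesis by (simp add: min_gens_def)
qed

lemma min_gens_subset:
  assumes "0 \<notin> G" "G \<subseteq> S" "\<forall>x\<in>S. x \<noteq> 0 \<longrightarrow> (\<exists>g\<in>G. \<exists>y\<in>S. x = g + y)"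
  shows "min_gens S \<subseteq> G"
proof
  fix s assume s: "s \<in> min_gens S"
  then have irreducible: "\<not> (\<exists>a\<in>S. \<exists>b\<in>S. a \<noteq> 0 \<and> b \<noteq> 0 \<and> a + b = s)"
    and "s \<in> S" "s \<noteq> 0"
    by (simp_all add: min_gens_def)
  then obtain g y where g: "g \<in> G" "y \<in> S" "s = g + y"
    using assms(3) by blast
  have "g \<in> S" using g(1) assms(2) by blast
  moreover have "g \<noteq> 0" using g(1) assms(1) by metis
  ultimately have "y = 0" using irreducible g(2,3) by metis
  with g show "s \<in> G" by simp
qed

lemma alpha_rectangularI:
  assumes inj: "inj_on g {..<n}"
    and gens: "min_gens S - {multiplicity_ns S} = g ` {..<n}"
    and apery: "apery S = {(\<Sum>i<n. l i * g i) | l. \<forall>i<n. l i \<le> alpha_ns S (g i)}"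
  shows "alpha_rectangular S"
proof -
  let ?G = "g ` {..<n}"
  have reindex: "(\<Sum>x\<in>?G. lam x * x) = (\<Sum>i<n. lam (g i) * g i)" for lam
    by (simp add: sum.reindex[OF inj])
  have "{(\<Sum>i<n. l i * g i) | l. \<forall>i<n. l i \<le> alpha_ns S (g i)}
      = {(\<Sum>x\<in>?G. lam x * x) | lam. \<forall>x\<in>?G. lam x \<le> alpha_ns S x}"
  proof (intro set_eqI iffI)
    fix s assume "s \<in> {(\<Sum>i<n. l i * g i) | l. \<forall>i<n. l i \<le> alpha_ns S (g i)}"
    then obtain l where l: "\<forall>i<n. l i \<le> alpha_ns S (g i)" "s = (\<Sum>i<n. l i * g i)" by blast
    define lam where "lam = l \<circ> inv_into {..<n} g"
    have lam_g: "lam (g i) = l i" if "i < n" for i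
      using that inv_into_f_f[OF inj] by (simp add: lam_def)
    have "s = (\<Sum>x\<in>?G. lam x * x)" using l(2) by (simp add: reindex lam_g)
    moreover have "\<forall>x\<in>?G. lam x \<le> alpha_ns S x" using l(1) lam_g by auto
    ultimately show "s \<in> {(\<Sum>x\<in>?G. lam x * x) | lam. \<forall>x\<in>?G. lam x \<le> alpha_ns S x}" by blast
  next
    fix s assume "s \<in> {(\<Sum>x\<in>?G. lam x * x) | lam. \<forall>x\<in>?G. lam x \<le> alpha_ns S x}"
    then obtain lam where "\<forall>x\<in>?G. lam x \<le> alpha_ns S x" "s = (\<Sum>i<n. lam (g i) * g i)"
      by (auto simp: reindex)
    then show "s \<in> {(\<Sum>i<n. l i * g i) | l. \<forall>i<n. l i \<le> alpha_ns S (g i)}" by auto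
  qed
  with apery gens show ?thesis by (simp add: alpha_rectangular_def)
qed

locale mixed_radix_semigroup =
  fixes d :: "nat \<Rightarrow> nat" and n :: nat
  assumes radix_ge_2: "i < n \<Longrightarrow> 2 \<le> d i" and n_pos: "0 < n"
begin

definition place :: "nat \<Rightarrow> nat" where "place i = (\<Prod>j<i. d j)"
definition modulus :: nat where "modulus = place n"
definition gen :: "nat \<Rightarrow> nat" where "gen i = modulus + place i"
definition comb :: "(nat \<Rightarrow> nat) \<Rightarrow> nat" where "comb \<mu> = (\<Sum>i<n. \<mu> i * gen i)"
definition reduced :: "(nat \<Rightarrow> nat) \<Rightarrow> bool" where "reduced l \<longleftrightarrow> (\<forall>i<n. l i < d i)"
definition S :: "nat set" where "S = {a * modulus + comb \<mu> | a \<mu>. True}"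

lemma place_Suc: "place (Suc i) = place i * d i"
  by (simp add: place_def)

lemma radix_pos: "i < n \<Longrightarrow> 0 < d i"
  using radix_ge_2[of i] by simp

lemma place_pos: "i \<le> n \<Longrightarrow> 0 < place i"
  unfolding place_def using radix_pos by (intro prod_pos) auto

lemma place_strict_mono: "i < j \<Longrightarrow> j \<le> n \<Longrightarrow> place i < place j"
proof (induction j)
  case 0
  then show ?case by simp
next
  case (Suc j)
  have "place j < place (Suc j)"
    using place_pos[of j] radix_ge_2[of j] Suc.prems by (simp add: place_Suc)
  then show ?case using Suc by (cases "i = j") auto
qed

lemma modulus_gt_1: "1 < modulus"
  using place_strict_mono[of 0 n] n_pos by (simp add: modulus_def place_def)

lemma modulus_less_gen: "modulus < gen i" if "i < n"
  using place_pos[of i] that by (simp add: gen_def)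

lemma gen_less_double_modulus: "gen i < 2 * modulus" if "i < n"
  using place_strict_mono[OF that] by (simp add: gen_def modulus_def)

lemma inj_on_gen: "inj_on gen {..<n}"
proof (rule linorder_inj_onI')
  fix i j assume "j \<in> {..<n}" "i < j"
  then show "gen i \<noteq> gen j" using place_strict_mono[of i j] by (simp add: gen_def)
qed

lemma comb_altdef: "comb \<mu> = (\<Sum>i<n. \<mu> i) * modulus + (\<Sum>i<n. \<mu> i * place i)"
  by (simp add: comb_def gen_def distrib_left sum.distrib sum_distrib_right)

lemma comb_update: "comb (\<mu>(j := v)) + \<mu> j * gen j = comb \<mu> + v * gen j" if "j < n"
proof -
  have split: "comb f = f j * gen j + (\<Sum>i\<in>{..<n} - {j}. f i * gen i)" for f
    using that by (simp add: comb_def sum.remove)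
  show ?thesis by (simp add: split[of "\<mu>(j := v)"] split[of \<mu>])
qed

lemma comb_single: "comb ((\<lambda>_. 0)(i := h)) = h * gen i" if "i < n"
  using comb_update[OF that, of "\<lambda>_. 0" h] by (simp add: comb_def)

lemma radix_mult_gen: "d i * gen i = d i * modulus + place (Suc i)"
  by (simp add: gen_def place_Suc algebra_simps)

lemma comb_remove_gen: "comb \<mu> = gen j + comb (\<mu>(j := \<mu> j - 1))" if "j < n" "\<mu> j \<noteq> 0"
  using comb_update[OF that(1), of \<mu> "\<mu> j - 1"] that(2) by (cases "\<mu> j") simp_all

lemma normal_form_add_gen:
  assumes "reduced l" "j < n"
  shows "\<exists>l' c. reduced l' \<and> comb l + gen j = comb l' + c * modulus"
  using assms
proof (induction "n - j" arbitrary: l j rule: less_induct)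
  case less
  show ?case
  proof (cases "Suc (l j) < d j")
    case True
    let ?l' = "l(j := Suc (l j))"
    have "reduced ?l'" using less.prems True by (simp add: reduced_def)
    moreover have "comb l + gen j = comb ?l'"
      using comb_update[OF less.prems(2), of l "Suc (l j)"] by simp
    ultimately show ?thesis by (intro exI[of _ ?l'] exI[of _ 0]) simp
  next
    case False
    moreover have "l j < d j" using less.prems by (simp add: reduced_def)
    ultimately have "Suc (l j) = d j" by simp
    let ?l0 = "l(j := 0)"
    have "reduced ?l0" using less.prems radix_pos by (simp add: reduced_def)
    have "comb l + gen j = comb ?l0 + Suc (l j) * gen j"
      using comb_update[OF less.prems(2), of l 0] by simp
    also have "\<dots> = comb ?l0 + d j * modulus + place (Suc j)"
      using \<open>Suc (l j) = d j\<close> radix_mult_gen[of j] by simp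
    finally have carry: "comb l + gen j = comb ?l0 + d j * modulus + place (Suc j)" .
    show ?thesis
    proof (cases "Suc j < n")
      case True
      have "d j * modulus = (d j - 1) * modulus + modulus"
        using radix_pos[OF less.prems(2)] by (cases "d j") simp_all
      with carry have "comb l + gen j = comb ?l0 + gen (Suc j) + (d j - 1) * modulus"
        by (simp add: gen_def)
      moreover have "n - Suc j < n - j" using True by simp
      then obtain l' c where "reduced l'" "comb ?l0 + gen (Suc j) = comb l' + c * modulus"
        using less.hyps \<open>reduced ?l0\<close> True by blast
      ultimately show ?thesis
        by (intro exI[of _ l'] exI[of _ "c + (d j - 1)"]) (simp add: algebra_simps)
    next
      case False
      with less.prems have "Suc j = n" by simp
      then have "place (Suc j) = modulus" by (simp add: modulus_def)
      with carry show ?thesis using \<open>reduced ?l0\<close>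
        by (intro exI[of _ ?l0] exI[of _ "Suc (d j)"]) simp
    qed
  qed
qed

lemma comb_normal_form: "\<exists>l c. reduced l \<and> comb \<mu> = comb l + c * modulus"
proof (induction "\<Sum>i<n. \<mu> i" arbitrary: \<mu> rule: less_induct)
  case less
  show ?case
  proof (cases "\<forall>i<n. \<mu> i = 0")
    case True
    then have "comb \<mu> = comb (\<lambda>_. 0) + 0 * modulus" by (simp add: comb_def)
    moreover have "reduced (\<lambda>_. 0)" using radix_pos by (simp add: reduced_def)
    ultimately show ?thesis by blast
  next
    case False
    then obtain j where j: "j < n" "\<mu> j \<noteq> 0" by blast
    let ?\<mu>' = "\<mu>(j := \<mu> j - 1)"
    have "(\<Sum>i<n. ?\<mu>' i) < (\<Sum>i<n. \<mu> i)"
      using j by (intro sum_strict_mono_ex1) auto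
    then obtain l c where "reduced l" "comb ?\<mu>' = comb l + c * modulus"
      using less by blast
    moreover obtain l' c' where "reduced l'" "comb l + gen j = comb l' + c' * modulus"
      using normal_form_add_gen[OF \<open>reduced l\<close> j(1)] by blast
    ultimately show ?thesis
      using comb_remove_gen[where \<mu> = \<mu>, OF j] by (intro exI[of _ l'] exI[of _ "c + c'"]) (simp add: algebra_simps)
  qed
qed

lemma comb_add: "comb (\<lambda>i. \<mu> i + \<nu> i) = comb \<mu> + comb \<nu>"
  by (simp add: comb_def distrib_right sum.distrib)

lemma normal_form:
  assumes "x \<in> S"
  shows "\<exists>l c. reduced l \<and> x = comb l + c * modulus"
proof -
  obtain a \<mu> where "x = a * modulus + comb \<mu>" using assms by (auto simp: S_def)
  moreover obtain l c where "reduced l" "comb \<mu> = comb l + c * modulus"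
    using comb_normal_form by blast
  ultimately show ?thesis by (intro exI[of _ l] exI[of _ "a + c"]) (simp add: algebra_simps)
qed

lemma place_sum_less_modulus: "reduced l \<Longrightarrow> (\<Sum>i<n. l i * place i) < modulus"
  unfolding reduced_def place_def modulus_def by (rule mixed_radix_sum_less)

lemma normal_form_unique:
  assumes "reduced l" "reduced l'" "comb l + c * modulus = comb l' + c' * modulus"
  shows "c = c'"
proof -
  let ?P = "\<lambda>l. \<Sum>i<n. l i * place i"
  have eq: "((\<Sum>i<n. l i) + c) * modulus + ?P l = ((\<Sum>i<n. l' i) + c') * modulus + ?P l'"
    using assms(3) by (simp add: comb_altdef algebra_simps)
  then have "?P l mod modulus = ?P l' mod modulus"
    by (metis mod_mult_self3)
  then have "?P l = ?P l'"
    using place_sum_less_modulus assms(1,2) by simp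
  then have "\<forall>i<n. l i = l' i"
    using assms(1,2) mixed_radix_inj[of n l d l'] by (simp add: reduced_def place_def)
  then have "(\<Sum>i<n. l i) = (\<Sum>i<n. l' i)" by simp
  with eq \<open>?P l = ?P l'\<close> modulus_gt_1 show ?thesis by simp
qed

lemma mem_S: "a * modulus + comb \<mu> \<in> S"
  unfolding S_def by blast

lemma S_add:
  assumes "x \<in> S" "y \<in> S"
  shows "x + y \<in> S"
proof -
  obtain a \<mu> b \<nu> where "x = a * modulus + comb \<mu>" "y = b * modulus + comb \<nu>"
    using assms by (auto simp: S_def)
  then have "x + y = (a + b) * modulus + comb (\<lambda>i. \<mu> i + \<nu> i)"
    by (simp add: comb_add algebra_simps)
  then show ?thesis using mem_S by simp
qed

lemma zero_in_S: "0 \<in> S"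
  using mem_S[of 0 "\<lambda>_. 0"] by (simp add: comb_def)

lemma modulus_in_S: "modulus \<in> S"
  using mem_S[of 1 "\<lambda>_. 0"] by (simp add: comb_def)

lemma gen_in_S: "i < n \<Longrightarrow> gen i \<in> S"
  using mem_S[of 0 "(\<lambda>_. 0)(i := 1)"] comb_single[of i 1] by simp

lemma modulus_le_S: "x \<in> S \<Longrightarrow> x \<noteq> 0 \<Longrightarrow> modulus \<le> x"
proof -
  assume "x \<in> S" "x \<noteq> 0"
  then obtain a \<mu> where x: "x = (a + (\<Sum>i<n. \<mu> i)) * modulus + (\<Sum>i<n. \<mu> i * place i)"
    by (auto simp: S_def comb_altdef algebra_simps)
  show ?thesis
  proof (cases "a + (\<Sum>i<n. \<mu> i) = 0")
    case True
    then have "\<forall>i<n. \<mu> i = 0" by simp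
    with True x \<open>x \<noteq> 0\<close> show ?thesis by simp
  next
    case False
    then show ?thesis using x by (cases "a + (\<Sum>i<n. \<mu> i)") simp_all
  qed
qed

lemma numerical_semigroup_S: "numerical_semigroup S"
proof -
  have "x \<in> S" if "modulus * modulus \<le> x" for x
  proof -
    define q r where "q = x div modulus" and "r = x mod modulus"
    have "r < modulus" using modulus_gt_1 by (simp add: r_def)
    moreover have "modulus \<le> q"
      using div_le_mono[OF that, of modulus] modulus_gt_1 by (simp add: q_def)
    ultimately have "x = (q - r) * modulus + r * gen 0"
      using div_mult_mod_eq[of x modulus]
      by (simp add: q_def r_def gen_def place_def algebra_simps diff_mult_distrib)
    then show ?thesis
      using mem_S[of "q - r" "(\<lambda>_. 0)(0 := r)"] comb_single[OF n_pos, of r] by simp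
  qed
  then have "UNIV - S \<subseteq> {..<modulus * modulus}" by (meson Diff_iff lessThan_iff not_le subsetI)
  then show ?thesis
    unfolding numerical_semigroup_def using zero_in_S S_add finite_subset by blast
qed

lemma S_decompose:
  assumes "x \<in> S" "x \<noteq> 0"
  shows "\<exists>g\<in>insert modulus (gen ` {..<n}). \<exists>y\<in>S. x = g + y"
proof -
  obtain a \<mu> where x: "x = a * modulus + comb \<mu>" using assms(1) by (auto simp: S_def)
  show ?thesis
  proof (cases a)
    case (Suc a')
    then have "x = modulus + (a' * modulus + comb \<mu>)" using x by simp
    then show ?thesis using mem_S by blast
  next
    case 0
    have "\<exists>j<n. \<mu> j \<noteq> 0"
    proof (rule ccontr)
      assume "\<not> (\<exists>j<n. \<mu> j \<noteq> 0)"
      then have "comb \<mu> = 0" by (simp add: comb_def)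
      with x 0 assms(2) show False by simp
    qed
    then obtain j where j: "j < n" "\<mu> j \<noteq> 0" by blast
    then have "x = gen j + comb (\<mu>(j := \<mu> j - 1))"
      using x 0 comb_remove_gen[where \<mu> = \<mu>] by simp
    then show ?thesis using j mem_S[of 0] by fastforce
  qed
qed

lemma min_gens_S: "min_gens S = insert modulus (gen ` {..<n})"
proof
  show "insert modulus (gen ` {..<n}) \<subseteq> min_gens S"
  proof
    fix s assume "s \<in> insert modulus (gen ` {..<n})"
    then have "s \<in> S \<and> s \<noteq> 0 \<and> s < 2 * modulus"
      using modulus_in_S modulus_gt_1 gen_in_S modulus_less_gen gen_less_double_modulus
      by fastforce
    then show "s \<in> min_gens S"
      using modulus_le_S by (intro min_gens_memI[where m = modulus]) auto
  qed
next
  have "0 \<notin> insert modulus (gen ` {..<n})"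
    using modulus_gt_1 by (auto simp: gen_def)
  then show "min_gens S \<subseteq> insert modulus (gen ` {..<n})"
    using modulus_in_S gen_in_S S_decompose by (intro min_gens_subset) auto
qed

lemma multiplicity_S: "multiplicity_ns S = modulus"
  unfolding multiplicity_ns_def min_gens_S
  using modulus_less_gen by (intro Min_eqI) (auto intro: less_imp_le)

lemma modulus_notin_gen_image: "modulus \<notin> gen ` {..<n}"
proof
  assume "modulus \<in> gen ` {..<n}"
  then obtain i where "i < n" "modulus = gen i" by blast
  with modulus_less_gen show False by (metis less_irrefl)
qed

lemma embedding_dimension_S: "embedding_dimension S = Suc n"
  unfolding embedding_dimension_def min_gens_S
  using card_image[OF inj_on_gen] modulus_notin_gen_image by simp

lemma apery_S: "apery S = {comb l | l. reduced l}"
proof (intro set_eqI iffI)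
  fix s assume s: "s \<in> apery S"
  then have "s \<in> S" by (simp add: apery_def)
  then obtain l c where l: "reduced l" "s = comb l + c * modulus"
    using normal_form by blast
  have "c = 0"
  proof (rule ccontr)
    assume "c \<noteq> 0"
    then have "modulus \<le> s \<and> s - modulus = (c - 1) * modulus + comb l"
      using l(2) by (cases c) simp_all
    with s mem_S show False by (simp add: apery_def multiplicity_S)
  qed
  with l show "s \<in> {comb l | l. reduced l}" by auto
next
  fix s assume "s \<in> {comb l | l. reduced l}"
  then obtain l where l: "reduced l" "s = comb l" by blast
  have "\<not> (modulus \<le> s \<and> s - modulus \<in> S)"
  proof
    assume s: "modulus \<le> s \<and> s - modulus \<in> S"
    then obtain l' c where "reduced l'" "s - modulus = comb l' + c * modulus"
      using normal_form by blast
    moreover have "s = (s - modulus) + modulus" using s by simp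
    ultimately have "comb l + 0 * modulus = comb l' + Suc c * modulus"
      using l(2) by simp
    with l(1) \<open>reduced l'\<close> show False using normal_form_unique by blast
  qed
  with l show "s \<in> apery S"
    using mem_S[of 0] by (simp add: apery_def multiplicity_S)
qed

lemma alpha_ns_gen: "alpha_ns S (gen i) = d i - 1" if "i < n"
proof (rule alpha_ns_eqI[OF numerical_semigroup_S gen_in_S[OF that]])
  have "reduced ((\<lambda>_. 0)(i := d i - 1))"
    using radix_pos by (simp add: reduced_def)
  moreover have "(d i - 1) * gen i = comb ((\<lambda>_. 0)(i := d i - 1))"
    using comb_single[OF that] by simp
  ultimately show "(d i - 1) * gen i \<in> apery S"
    unfolding apery_S by blast
  have rest: "(d i - 1) * modulus + place (Suc i) \<in> S"
  proof (cases "Suc i < n")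
    case True
    have "d i - 1 = Suc (d i - 2)" using radix_ge_2[OF that] by simp
    then have "(d i - 1) * modulus + place (Suc i) = (d i - 2) * modulus + gen (Suc i)"
      by (simp add: gen_def)
    then show ?thesis using S_add[OF mem_S[of _ "\<lambda>_. 0"] gen_in_S[OF True]] by (simp add: comb_def)
  next
    case False
    with that have "Suc i = n" by simp
    then have "(d i - 1) * modulus + place (Suc i) = d i * modulus + comb (\<lambda>_. 0)"
      using radix_pos[OF that] by (cases "d i") (simp_all add: modulus_def comb_def)
    then show ?thesis using mem_S by simp
  qed
  have "d i * gen i = modulus + ((d i - 1) * modulus + place (Suc i))"
    using radix_mult_gen[of i] radix_pos[OF that] by (cases "d i") simp_all
  with rest show "Suc (d i - 1) * gen i \<notin> apery S"
    using radix_pos[OF that] by (simp add: apery_def multiplicity_S)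
qed

lemma alpha_rectangular_S: "alpha_rectangular S"
proof (rule alpha_rectangularI[OF inj_on_gen])
  show "min_gens S - {multiplicity_ns S} = gen ` {..<n}"
    using modulus_notin_gen_image by (auto simp: min_gens_S multiplicity_S)
  have "reduced l \<longleftrightarrow> (\<forall>i<n. l i \<le> alpha_ns S (gen i))" for l
    using radix_pos by (auto simp: reduced_def alpha_ns_gen less_Suc_eq_le[symmetric])
  then show "apery S = {\<Sum>i<n. l i * gen i | l. \<forall>i<n. l i \<le> alpha_ns S (gen i)}"
    by (simp add: apery_S comb_def)
qed

end

theorem mainTheorem11:
  fixes m \<nu> :: nat
  assumes "m > 0" and "\<nu> \<ge> 2"
    and "size (prime_factorization m) \<ge> \<nu> - 1"
  shows "\<exists>S. numerical_semigroup S \<and> multiplicity_ns S = m \<and>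
             embedding_dimension S = \<nu> \<and> alpha_rectangular S"
proof -
  define n where "n = \<nu> - 1"
  have "n \<ge> 1" "Suc n = \<nu>" using assms(2) by (simp_all add: n_def)
  then obtain d where d: "\<forall>i<n. 2 \<le> d i" "(\<Prod>i<n. d i) = m"
    using prime_factorization_split[OF assms(1) _ assms(3)] by (auto simp: n_def)
  interpret mixed_radix_semigroup d n
    using d \<open>n \<ge> 1\<close> by unfold_locales auto
  have "modulus = m" using d(2) by (simp add: modulus_def place_def)
  with \<open>Suc n = \<nu>\<close> show ?thesis
    using numerical_semigroup_S multiplicity_S embedding_dimension_S alpha_rectangular_S by metis
qed

end
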